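(* Let $\xi_1,\dots,\xi_n$ be independent real random variables with $\mathbf{E}\xi_i=0$, satisfying Bernstein's condition: there is a constant $\varepsilon>0$ such that $|\mathbf{E}\xi_i^k|\le \frac12 k!\,\varepsilon^{k-2}\mathbf{E}\xi_i^2$ for all $k\ge 3$ and $i=1,\dots,n$. Let $\sigma^2=\sum_{i=1}^n\mathbf{E}\xi_i^2$ and, for $0\le\lambda<\varepsilon^{-1}$, \[ \overline{\sigma}^2(\lambda)=\sum_{i=1}^n\Big(\frac{\mathbf{E}\xi_i^2e^{\lambda\xi_i}}{\mathbf{E}e^{\lambda\xi_i}}-\frac{(\mathbf{E}\xi_ie^{\lambda\xi_i})^2}{(\mathbf{E}e^{\lambda\xi_i})^2}\Big). \] Then for all $0\le\lambda<\varepsilon^{-1}$, \[ \frac{(1-\lambda\varepsilon)^2(1-3\lambda\varepsilon)}{(1-\lambda\varepsilon+6\lambda^2\varepsilon^2)^2}\sigma^2\le\overline{\sigma}^2(\lambda)\le\frac{\sigma^2}{(1-\lambda\varepsilon)^3}. \] *)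

theory Defs
  imports "HOL-Probability.Probability"
begin

definition sigma_sq :: "'a measure \<Rightarrow> (nat \<Rightarrow> 'a \<Rightarrow> real) \<Rightarrow> nat \<Rightarrow> real" where
  "sigma_sq M X n = (\<Sum>i=1..n. integral\<^sup>L M (\<lambda>x. (X i x)^2))"

definition sigma_bar_sq :: "'a measure \<Rightarrow> (nat \<Rightarrow> 'a \<Rightarrow> real) \<Rightarrow> nat \<Rightarrow> real \<Rightarrow> real" where
  "sigma_bar_sq M X n l = (\<Sum>i=1..n.
      integral\<^sup>L M (\<lambda>x. (X i x)^2 * exp (l * X i x)) / integral\<^sup>L M (\<lambda>x. exp (l * X i x))
    - (integral\<^sup>L M (\<lambda>x. X i x * exp (l * X i x)))^2 / (integral\<^sup>L M (\<lambda>x. exp (l * X i x)))^2)"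

end

theory Submission
  imports Defs "HOL-Analysis.Generalised_Binomial_Theorem"
begin

(* Fix one summand xi and write A, B, C for the expectations of exp (l xi), xi exp (l xi) and
   xi^2 exp (l xi), so that its conjugate variance is (A C - B^2) / A^2.
   Bernstein's condition gives |E xi^(k+2)| <= (k+2)!/2 eps^k sigma^2, so the power series of C is
   dominated by sigma^2 * sum_k binom(k+2, 2) (l eps)^k = sigma^2 / (1 - l eps)^3; together with
   A >= 1 (from exp t >= 1 + t and E xi = 0) this is the upper bound.
   For the lower bound, 2 (A C - B^2) = E E' (xi - xi')^2 exp (l xi + l xi') for an independent
   copy xi', and exp t >= 1 + t turns the right-hand side into 2 (sigma^2 + l E xi^3), which is at
   least 2 (1 - 3 l eps) sigma^2. The series of A is bounded using sigma^2 <= 12 eps^2, which follows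
   from sigma^4 <= E xi^4 <= 12 eps^2 sigma^2, and gives A <= (1 - l eps + 6 l^2 eps^2) / (1 - l eps). *)

lemma negative_binomial_sums:
  fixes x :: real
  assumes "\<bar>x\<bar> < 1"
  shows "(\<lambda>k. real ((k + m) choose m) * x ^ k) sums (1 / (1 - x) ^ Suc m)"
proof -
  have coeff: "(- real (Suc m) gchoose k) = (-1) ^ k * real ((k + m) choose m)" for k
  proof -
    have "(- real (Suc m) gchoose k) = (-1) ^ k * ((real (Suc m) + real k - 1) gchoose k)"
      by (rule gbinomial_minus)
    also have "real (Suc m) + real k - 1 = real (k + m)" by simp
    also have "real (k + m) gchoose k = real ((k + m) choose k)"
      by (rule binomial_gbinomial[symmetric])
    also have "(k + m) choose k = (k + m) choose m"
      using binomial_symmetric[of k "k + m"] by simp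
    finally show ?thesis .
  qed
  have "(\<lambda>k. (- real (Suc m) gchoose k) * (- x) ^ k) sums (1 + - x) powr (- real (Suc m))"
    using assms by (intro gen_binomial_real) simp
  moreover have "(1 + - x) powr (- real (Suc m)) = 1 / (1 - x) ^ Suc m"
  proof -
    have "(1 - x) powr (- real (Suc m)) = inverse ((1 - x) powr real (Suc m))"
      by (rule powr_minus)
    also have "(1 - x) powr real (Suc m) = (1 - x) ^ Suc m"
      using assms by (intro powr_realpow) simp
    finally show ?thesis by (simp add: divide_inverse)
  qed
  moreover have "(- real (Suc m) gchoose k) * (- x) ^ k = real ((k + m) choose m) * x ^ k" for k
    unfolding coeff power_minus[of x] by (simp add: algebra_simps flip: power_mult_distrib)
  ultimately show ?thesis
    by simp
qed

lemma sum_power_div_fact_le_exp: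
  fixes y :: real
  assumes "0 \<le> y"
  shows "(\<Sum>k<n. y ^ k / fact k) \<le> exp y"
proof -
  have "(\<lambda>k. y ^ k / fact k) sums exp y"
    using exp_converges[of y] by (simp add: divide_inverse mult.commute)
  then have "(\<Sum>k<n. y ^ k / fact k) \<le> (\<Sum>k. y ^ k / fact k)"
    using assms by (intro sum_le_suminf) (auto simp: sums_iff)
  then show ?thesis
    using \<open>(\<lambda>k. y ^ k / fact k) sums exp y\<close> by (simp add: sums_iff)
qed

lemma exp_abs_le_2_cosh: "exp \<bar>t\<bar> \<le> 2 * cosh (t :: real)"
  by (cases "0 \<le> t") (simp_all add: cosh_def)

lemma sums_integral_power_mult_exp:
  fixes Y :: "'a \<Rightarrow> real"
  assumes moments: "\<And>k. integrable M (\<lambda>w. Y w ^ k)"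
    and dominated: "integrable M (\<lambda>w. \<bar>Y w\<bar> ^ j * exp \<bar>l * Y w\<bar>)"
  shows "(\<lambda>k. l ^ k / fact k * integral\<^sup>L M (\<lambda>w. Y w ^ (k + j)))
           sums integral\<^sup>L M (\<lambda>w. Y w ^ j * exp (l * Y w))"
proof -
  have [measurable]: "Y \<in> borel_measurable M"
    using borel_measurable_integrable[OF moments[of 1]] by simp
  define S where "S N w = (\<Sum>k<N. l ^ k / fact k * Y w ^ (k + j))" for N w
  have "(\<lambda>N. integral\<^sup>L M (S N)) \<longlonglongrightarrow> integral\<^sup>L M (\<lambda>w. Y w ^ j * exp (l * Y w))"
  proof (rule integral_dominated_convergence[OF _ _ dominated])
    show "AE w in M. (\<lambda>N. S N w) \<longlonglongrightarrow> Y w ^ j * exp (l * Y w)"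
    proof (rule AE_I2)
      fix w
      have "(\<lambda>k. Y w ^ j * ((l * Y w) ^ k / fact k)) sums (Y w ^ j * exp (l * Y w))"
        using exp_converges[of "l * Y w"] by (intro sums_mult) (simp add: divide_inverse mult.commute)
      then show "(\<lambda>N. S N w) \<longlonglongrightarrow> Y w ^ j * exp (l * Y w)"
        by (simp add: S_def sums_def power_mult_distrib power_add mult_ac)
    qed
    show "AE w in M. norm (S N w) \<le> \<bar>Y w\<bar> ^ j * exp \<bar>l * Y w\<bar>" for N
    proof (rule AE_I2)
      fix w
      have "norm (S N w) \<le> (\<Sum>k<N. \<bar>l ^ k / fact k * Y w ^ (k + j)\<bar>)"
        unfolding S_def real_norm_def by (rule sum_abs)
      also have "\<dots> = \<bar>Y w\<bar> ^ j * (\<Sum>k<N. \<bar>l * Y w\<bar> ^ k / fact k)"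
        by (simp add: sum_distrib_left abs_mult power_abs power_mult_distrib power_add mult_ac)
      also have "\<dots> \<le> \<bar>Y w\<bar> ^ j * exp \<bar>l * Y w\<bar>"
        by (intro mult_left_mono sum_power_div_fact_le_exp) auto
      finally show "norm (S N w) \<le> \<bar>Y w\<bar> ^ j * exp \<bar>l * Y w\<bar>" .
    qed
    show "S N \<in> borel_measurable M" for N
      unfolding S_def by measurable
  qed measurable
  moreover have "integral\<^sup>L M (S N) = (\<Sum>k<N. l ^ k / fact k * integral\<^sup>L M (\<lambda>w. Y w ^ (k + j)))" for N
    unfolding S_def by (simp add: moments)
  ultimately show ?thesis
    by (simp add: sums_def)
qed

lemma integrable_sq_mult_cosh:
  fixes Y :: "'a \<Rightarrow> real"
  assumes moments: "\<And>k. integrable M (\<lambda>w. Y w ^ k)"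
    and summable: "summable (\<lambda>k. \<bar>l ^ k / fact k * integral\<^sup>L M (\<lambda>w. Y w ^ (k + 2))\<bar>)"
  shows "integrable M (\<lambda>w. (Y w)\<^sup>2 * cosh (l * Y w))"
proof -
  \<comment> \<open>Only even moments occur; they are absolute moments, so the series can be integrated termwise.\<close>
  define c where "c k = (if even k then l ^ k / fact k else 0)" for k
  define f where "f k w = c k * Y w ^ (k + 2)" for k w
  have f_nonneg: "0 \<le> f k w" for k w
  proof (cases "even k")
    case True
    then have "0 \<le> l ^ k" and "0 \<le> Y w ^ (k + 2)"
      by (intro zero_le_even_power; simp)+
    then show ?thesis by (simp add: f_def c_def)
  qed (simp add: f_def c_def)
  have f_sums: "(\<lambda>k. f k w) sums ((Y w)\<^sup>2 * cosh (l * Y w))" for w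
  proof -
    have "(\<lambda>k. (Y w)\<^sup>2 * (if even k then (l * Y w) ^ k / fact k else 0)) sums ((Y w)\<^sup>2 * cosh (l * Y w))"
      using cosh_converges[of "l * Y w"] by (intro sums_mult) (simp add: divide_inverse mult.commute cong: if_cong)
    moreover have "(Y w)\<^sup>2 * (if even k then (l * Y w) ^ k / fact k else 0) = f k w" for k
      by (simp add: f_def c_def power_mult_distrib power_add power2_eq_square mult_ac)
    ultimately show ?thesis by simp
  qed
  have "integrable M (\<lambda>w. \<Sum>k. f k w)"
  proof (rule integrable_suminf)
    show "integrable M (f k)" for k
      unfolding f_def by (intro integrable_mult_right moments)
    show "AE w in M. summable (\<lambda>k. norm (f k w))"
      using f_sums f_nonneg by (auto intro: sums_summable)
    show "summable (\<lambda>k. integral\<^sup>L M (\<lambda>w. norm (f k w)))"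
    proof (rule summable_comparison_test'[OF summable])
      show "norm (integral\<^sup>L M (\<lambda>w. norm (f k w))) \<le> \<bar>l ^ k / fact k * integral\<^sup>L M (\<lambda>w. Y w ^ (k + 2))\<bar>" for k
        using f_nonneg by (simp add: f_def c_def moments)
    qed
  qed
  then show ?thesis
    using f_sums by (simp add: sums_iff)
qed

lemma integrable_abs_power_mult_exp_abs_of_sq_cosh:
  fixes Y :: "'a \<Rightarrow> real"
  assumes "finite_measure M" and [measurable]: "Y \<in> borel_measurable M"
    and cosh: "integrable M (\<lambda>w. (Y w)\<^sup>2 * cosh (l * Y w))" and "j \<le> 2"
  shows "integrable M (\<lambda>w. \<bar>Y w\<bar> ^ j * exp \<bar>l * Y w\<bar>)"
proof (rule Bochner_Integration.integrable_bound)
  show "integrable M (\<lambda>w. exp \<bar>l\<bar> + 2 * ((Y w)\<^sup>2 * cosh (l * Y w)))"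
    using cosh by (intro Bochner_Integration.integrable_add integrable_mult_right
        finite_measure.integrable_const[OF \<open>finite_measure M\<close>])
  show "AE w in M. norm (\<bar>Y w\<bar> ^ j * exp \<bar>l * Y w\<bar>) \<le> norm (exp \<bar>l\<bar> + 2 * ((Y w)\<^sup>2 * cosh (l * Y w)))"
  proof (rule AE_I2)
    fix w
    have "\<bar>Y w\<bar> ^ j * exp \<bar>l * Y w\<bar> \<le> exp \<bar>l\<bar> + 2 * ((Y w)\<^sup>2 * cosh (l * Y w))"
    proof (cases "\<bar>Y w\<bar> \<le> 1")
      case True
      then have "\<bar>Y w\<bar> ^ j * exp \<bar>l * Y w\<bar> \<le> 1 * exp \<bar>l\<bar>"
        by (intro mult_mono power_le_one) (auto simp: abs_mult mult_left_le)
      then show ?thesis by (simp add: add_increasing2)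
    next
      case False
      then have "\<bar>Y w\<bar> ^ j \<le> \<bar>Y w\<bar> ^ 2"
        using \<open>j \<le> 2\<close> by (intro power_increasing) auto
      then have "\<bar>Y w\<bar> ^ j * exp \<bar>l * Y w\<bar> \<le> (Y w)\<^sup>2 * (2 * cosh (l * Y w))"
        by (intro mult_mono exp_abs_le_2_cosh) auto
      then show ?thesis by (simp add: add_increasing mult_ac)
    qed
    then show "norm (\<bar>Y w\<bar> ^ j * exp \<bar>l * Y w\<bar>) \<le> norm (exp \<bar>l\<bar> + 2 * ((Y w)\<^sup>2 * cosh (l * Y w)))"
      by simp
  qed
qed simp

lemma integral_weighted_Cauchy_Schwarz:
  fixes Y e :: "'a \<Rightarrow> real"
  assumes [simp]: "integrable M e" "integrable M (\<lambda>w. Y w * e w)" "integrable M (\<lambda>w. (Y w)\<^sup>2 * e w)"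
    and e_nonneg: "\<And>w. w \<in> space M \<Longrightarrow> 0 \<le> e w" and A_pos: "0 < integral\<^sup>L M e"
  shows "(integral\<^sup>L M (\<lambda>w. Y w * e w))\<^sup>2 \<le> integral\<^sup>L M e * integral\<^sup>L M (\<lambda>w. (Y w)\<^sup>2 * e w)"
proof -
  define A B C where "A = integral\<^sup>L M e" and "B = integral\<^sup>L M (\<lambda>w. Y w * e w)"
    and "C = integral\<^sup>L M (\<lambda>w. (Y w)\<^sup>2 * e w)"
  define t where "t = B / A"
  have "0 \<le> integral\<^sup>L M (\<lambda>w. (Y w - t)\<^sup>2 * e w)"
    using e_nonneg by (intro integral_nonneg_AE AE_I2) auto
  also have "(\<lambda>w. (Y w - t)\<^sup>2 * e w) = (\<lambda>w. (Y w)\<^sup>2 * e w - 2 * t * (Y w * e w) + t\<^sup>2 * e w)"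
    by (auto simp: fun_eq_iff power2_eq_square algebra_simps)
  also have "integral\<^sup>L M \<dots> = C - 2 * t * B + t\<^sup>2 * A"
    by (simp add: A_def B_def C_def)
  also have "\<dots> = (A * C - B\<^sup>2) / A"
    using A_pos by (simp add: t_def A_def field_simps power2_eq_square)
  finally show ?thesis
    using A_pos by (simp add: A_def B_def C_def zero_le_divide_iff)
qed

context prob_space
begin

lemma exp_moment_ge_one:
  fixes Y :: "'a \<Rightarrow> real"
  assumes "integrable M Y" "expectation Y = 0" "integrable M (\<lambda>w. exp (l * Y w))"
  shows "1 \<le> expectation (\<lambda>w. exp (l * Y w))"
proof -
  have "expectation (\<lambda>w. 1 + l * Y w) \<le> expectation (\<lambda>w. exp (l * Y w))"
    using assms by (intro integral_mono) auto
  then show ?thesis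
    using assms by (simp add: prob_space)
qed

lemma exp_tilted_quadratic_ge:
  fixes Y :: "'a \<Rightarrow> real"
  assumes moments: "\<And>k. k \<le> 3 \<Longrightarrow> integrable M (\<lambda>w. Y w ^ k)"
    and tilted: "\<And>j. j \<le> 2 \<Longrightarrow> integrable M (\<lambda>w. Y w ^ j * exp (l * Y w))"
    and mean: "expectation Y = 0"
  shows "(1 + l * a) * a\<^sup>2 + (1 - l * a) * expectation (\<lambda>w. (Y w)\<^sup>2) + l * expectation (\<lambda>w. Y w ^ 3)
    \<le> exp (l * a) * (a\<^sup>2 * expectation (\<lambda>w. exp (l * Y w))
      - 2 * a * expectation (\<lambda>w. Y w * exp (l * Y w)) + expectation (\<lambda>w. (Y w)\<^sup>2 * exp (l * Y w)))"
proof -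
  have [simp]: "integrable M Y" "integrable M (\<lambda>w. (Y w)\<^sup>2)" "integrable M (\<lambda>w. Y w ^ 3)"
    using moments[of 1] moments[of 2] moments[of 3] by simp_all
  have [simp]: "integrable M (\<lambda>w. exp (l * Y w))" "integrable M (\<lambda>w. Y w * exp (l * Y w))"
    "integrable M (\<lambda>w. (Y w)\<^sup>2 * exp (l * Y w))"
    using tilted[of 0] tilted[of 1] tilted[of 2] by simp_all
  have lower_poly: "(\<lambda>v. (a - Y v)\<^sup>2 * (1 + l * a + l * Y v)) = (\<lambda>v. (1 + l * a) * a\<^sup>2
      + (l * a\<^sup>2 - 2 * a * (1 + l * a)) * Y v + (1 - l * a) * (Y v)\<^sup>2 + l * Y v ^ 3)"
    by (auto simp: fun_eq_iff algebra_simps power2_eq_square power3_eq_cube)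
  have upper_poly: "(\<lambda>v. (a - Y v)\<^sup>2 * exp (l * a + l * Y v)) = (\<lambda>v. exp (l * a) * a\<^sup>2 * exp (l * Y v)
      - 2 * exp (l * a) * a * (Y v * exp (l * Y v)) + exp (l * a) * ((Y v)\<^sup>2 * exp (l * Y v)))"
    by (auto simp: fun_eq_iff algebra_simps power2_eq_square exp_add)
  have "(1 + l * a) * a\<^sup>2 + (1 - l * a) * expectation (\<lambda>w. (Y w)\<^sup>2) + l * expectation (\<lambda>w. Y w ^ 3)
      = expectation (\<lambda>v. (a - Y v)\<^sup>2 * (1 + l * a + l * Y v))"
    using mean by (simp add: lower_poly prob_space)
  also have "\<dots> \<le> expectation (\<lambda>v. (a - Y v)\<^sup>2 * exp (l * a + l * Y v))"
  proof (rule integral_mono)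
    show "integrable M (\<lambda>v. (a - Y v)\<^sup>2 * (1 + l * a + l * Y v))"
      unfolding lower_poly by simp
    show "integrable M (\<lambda>v. (a - Y v)\<^sup>2 * exp (l * a + l * Y v))"
      unfolding upper_poly by simp
    show "(a - Y v)\<^sup>2 * (1 + l * a + l * Y v) \<le> (a - Y v)\<^sup>2 * exp (l * a + l * Y v)" for v
      using exp_ge_add_one_self[of "l * a + l * Y v"] by (intro mult_left_mono) (simp_all add: add.assoc)
  qed
  also have "\<dots> = exp (l * a) * a\<^sup>2 * expectation (\<lambda>w. exp (l * Y w))
      - 2 * exp (l * a) * a * expectation (\<lambda>w. Y w * exp (l * Y w))
      + exp (l * a) * expectation (\<lambda>w. (Y w)\<^sup>2 * exp (l * Y w))"
    unfolding upper_poly by simp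
  finally show ?thesis
    by (simp add: algebra_simps)
qed

lemma exp_tilted_gram_ge:
  fixes Y :: "'a \<Rightarrow> real"
  assumes moments: "\<And>k. k \<le> 3 \<Longrightarrow> integrable M (\<lambda>w. Y w ^ k)"
    and tilted: "\<And>j. j \<le> 2 \<Longrightarrow> integrable M (\<lambda>w. Y w ^ j * exp (l * Y w))"
    and mean: "expectation Y = 0"
  shows "expectation (\<lambda>w. (Y w)\<^sup>2) + l * expectation (\<lambda>w. Y w ^ 3)
    \<le> expectation (\<lambda>w. exp (l * Y w)) * expectation (\<lambda>w. (Y w)\<^sup>2 * exp (l * Y w))
      - (expectation (\<lambda>w. Y w * exp (l * Y w)))\<^sup>2"
proof -
  define A B C s m3 where "A = expectation (\<lambda>w. exp (l * Y w))"
    and "B = expectation (\<lambda>w. Y w * exp (l * Y w))"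
    and "C = expectation (\<lambda>w. (Y w)\<^sup>2 * exp (l * Y w))"
    and "s = expectation (\<lambda>w. (Y w)\<^sup>2)" and "m3 = expectation (\<lambda>w. Y w ^ 3)"
  have [simp]: "integrable M Y" "integrable M (\<lambda>w. (Y w)\<^sup>2)" "integrable M (\<lambda>w. Y w ^ 3)"
    using moments[of 1] moments[of 2] moments[of 3] by simp_all
  have [simp]: "integrable M (\<lambda>w. exp (l * Y w))" "integrable M (\<lambda>w. Y w * exp (l * Y w))"
    "integrable M (\<lambda>w. (Y w)\<^sup>2 * exp (l * Y w))"
    using tilted[of 0] tilted[of 1] tilted[of 2] by simp_all
  have lower_poly: "(\<lambda>w. (1 + l * Y w) * (Y w)\<^sup>2 + (1 - l * Y w) * s + l * m3)
      = (\<lambda>w. (Y w)\<^sup>2 + l * Y w ^ 3 + (s + l * m3) - l * s * Y w)"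
    by (auto simp: fun_eq_iff algebra_simps power2_eq_square power3_eq_cube)
  have upper_poly: "(\<lambda>w. exp (l * Y w) * ((Y w)\<^sup>2 * A - 2 * Y w * B + C))
      = (\<lambda>w. A * ((Y w)\<^sup>2 * exp (l * Y w)) - 2 * B * (Y w * exp (l * Y w)) + C * exp (l * Y w))"
    by (auto simp: fun_eq_iff algebra_simps)
  \<comment> \<open>Integrating the bound of \<open>exp_tilted_quadratic_ge\<close> in \<open>a = Y w\<close> symmetrises it without product measures.\<close>
  have "2 * (s + l * m3) = expectation (\<lambda>w. (1 + l * Y w) * (Y w)\<^sup>2 + (1 - l * Y w) * s + l * m3)"
    unfolding lower_poly using mean by (simp add: prob_space flip: s_def m3_def)
  also have "\<dots> \<le> expectation (\<lambda>w. exp (l * Y w) * ((Y w)\<^sup>2 * A - 2 * Y w * B + C))"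
  proof (rule integral_mono)
    show "integrable M (\<lambda>w. (1 + l * Y w) * (Y w)\<^sup>2 + (1 - l * Y w) * s + l * m3)"
      unfolding lower_poly by simp
    show "integrable M (\<lambda>w. exp (l * Y w) * ((Y w)\<^sup>2 * A - 2 * Y w * B + C))"
      unfolding upper_poly by simp
  qed (use exp_tilted_quadratic_ge[OF moments tilted mean] in \<open>simp add: A_def B_def C_def s_def m3_def\<close>)
  also have "\<dots> = A * C - 2 * B * B + C * A"
    unfolding upper_poly by (simp flip: A_def B_def C_def)
  also have "\<dots> = 2 * (A * C - B\<^sup>2)"
    by (simp add: algebra_simps power2_eq_square)
  finally show ?thesis
    by (simp add: A_def B_def C_def s_def m3_def)
qed

end

locale bernstein_variable = prob_space +
  fixes Y :: "'a \<Rightarrow> real" and eps :: real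
  assumes integrable_moments: "\<And>k. integrable M (\<lambda>w. Y w ^ k)"
    and mean_zero: "expectation Y = 0"
    and eps_pos: "0 < eps"
    and bernstein: "\<And>k. 3 \<le> k \<Longrightarrow>
      \<bar>expectation (\<lambda>w. Y w ^ k)\<bar> \<le> 1/2 * fact k * eps ^ (k - 2) * expectation (\<lambda>w. (Y w)\<^sup>2)"
begin

lemma borel_measurable_Y [measurable]: "Y \<in> borel_measurable M"
  using borel_measurable_integrable[OF integrable_moments[of 1]] by simp

lemma second_moment_nonneg: "0 \<le> expectation (\<lambda>w. (Y w)\<^sup>2)"
  by (intro integral_nonneg_AE) auto

lemma abs_moment_le:
  assumes "2 \<le> k"
  shows "\<bar>expectation (\<lambda>w. Y w ^ k)\<bar> \<le> fact k / 2 * eps ^ (k - 2) * expectation (\<lambda>w. (Y w)\<^sup>2)"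
proof (cases "k = 2")
  case True
  then show ?thesis
    using second_moment_nonneg by simp
next
  case False
  then show ?thesis
    using bernstein[of k] assms by simp
qed

lemma second_moment_le: "expectation (\<lambda>w. (Y w)\<^sup>2) \<le> 12 * eps\<^sup>2"
proof -
  define s where "s = expectation (\<lambda>w. (Y w)\<^sup>2)"
  have "0 \<le> variance (\<lambda>w. (Y w)\<^sup>2)"
    by (rule variance_positive)
  also have "variance (\<lambda>w. (Y w)\<^sup>2) = expectation (\<lambda>w. Y w ^ 4) - s\<^sup>2"
    using integrable_moments[of 2] integrable_moments[of 4]
    by (subst variance_eq) (simp_all add: s_def flip: power_mult)
  finally have "s\<^sup>2 \<le> expectation (\<lambda>w. Y w ^ 4)"
    by simp
  also have "\<dots> \<le> 12 * eps\<^sup>2 * s"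
    using abs_moment_le[of 4] by (simp add: s_def fact_numeral)
  finally have "s * s \<le> (12 * eps\<^sup>2) * s"
    by (simp add: power2_eq_square)
  moreover have "0 \<le> s"
    unfolding s_def by (rule second_moment_nonneg)
  ultimately show ?thesis
    unfolding s_def[symmetric] using eps_pos
    by (cases "s = 0") (auto dest: mult_right_le_imp_le)
qed

lemma abs_exp_series_term_le:
  "\<bar>l ^ k / fact k * expectation (\<lambda>w. Y w ^ (k + 2))\<bar>
     \<le> expectation (\<lambda>w. (Y w)\<^sup>2) * real ((k + 2) choose 2) * (\<bar>l\<bar> * eps) ^ k"
proof -
  have choose: "real ((k + 2) choose 2) = fact (k + 2) / (fact k * 2)"
    by (simp add: binomial_fact)
  have "\<bar>l ^ k / fact k * expectation (\<lambda>w. Y w ^ (k + 2))\<bar>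
      = \<bar>l\<bar> ^ k / fact k * \<bar>expectation (\<lambda>w. Y w ^ (k + 2))\<bar>"
    by (simp add: abs_mult power_abs)
  also have "\<dots> \<le> \<bar>l\<bar> ^ k / fact k * (fact (k + 2) / 2 * eps ^ k * expectation (\<lambda>w. (Y w)\<^sup>2))"
    using abs_moment_le[of "k + 2"] by (intro mult_left_mono) simp_all
  also have "\<dots> = expectation (\<lambda>w. (Y w)\<^sup>2) * real ((k + 2) choose 2) * (\<bar>l\<bar> * eps) ^ k"
    unfolding choose by (simp add: power_mult_distrib field_simps)
  finally show ?thesis .
qed

lemma exp_series_majorant_sums:
  assumes "\<bar>l\<bar> * eps < 1"
  shows "(\<lambda>k. expectation (\<lambda>w. (Y w)\<^sup>2) * real ((k + 2) choose 2) * (\<bar>l\<bar> * eps) ^ k)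
           sums (expectation (\<lambda>w. (Y w)\<^sup>2) / (1 - \<bar>l\<bar> * eps) ^ 3)"
  using sums_mult[OF negative_binomial_sums[of "\<bar>l\<bar> * eps" 2], of "expectation (\<lambda>w. (Y w)\<^sup>2)"]
    assms eps_pos by (simp add: mult.assoc numeral_3_eq_3)

lemma integrable_abs_power_mult_exp_abs:
  assumes "\<bar>l\<bar> * eps < 1" "j \<le> 2"
  shows "integrable M (\<lambda>w. \<bar>Y w\<bar> ^ j * exp \<bar>l * Y w\<bar>)"
proof (rule integrable_abs_power_mult_exp_abs_of_sq_cosh[OF finite_measure_axioms borel_measurable_Y _ \<open>j \<le> 2\<close>])
  show "integrable M (\<lambda>w. (Y w)\<^sup>2 * cosh (l * Y w))"
  proof (rule integrable_sq_mult_cosh[OF integrable_moments])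
    show "summable (\<lambda>k. \<bar>l ^ k / fact k * expectation (\<lambda>w. Y w ^ (k + 2))\<bar>)"
    proof (rule summable_comparison_test'[OF sums_summable[OF exp_series_majorant_sums[OF assms(1)]]])
      show "norm \<bar>l ^ k / fact k * expectation (\<lambda>w. Y w ^ (k + 2))\<bar>
          \<le> expectation (\<lambda>w. (Y w)\<^sup>2) * real ((k + 2) choose 2) * (\<bar>l\<bar> * eps) ^ k" for k
        unfolding real_norm_def abs_abs by (rule abs_exp_series_term_le)
    qed
  qed
qed

lemma integrable_power_mult_exp:
  assumes "\<bar>l\<bar> * eps < 1" "j \<le> 2"
  shows "integrable M (\<lambda>w. Y w ^ j * exp (l * Y w))"
proof (rule Bochner_Integration.integrable_bound[OF integrable_abs_power_mult_exp_abs[OF assms]])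
  have "l * Y w \<le> \<bar>l * Y w\<bar>" for w
    by (rule abs_ge_self)
  then show "AE w in M. norm (Y w ^ j * exp (l * Y w)) \<le> norm (\<bar>Y w\<bar> ^ j * exp \<bar>l * Y w\<bar>)"
    by (intro AE_I2) (simp add: abs_mult power_abs mult_left_mono)
qed measurable

lemma exp_moment_sums:
  assumes "\<bar>l\<bar> * eps < 1" "j \<le> 2"
  shows "(\<lambda>k. l ^ k / fact k * expectation (\<lambda>w. Y w ^ (k + j)))
           sums expectation (\<lambda>w. Y w ^ j * exp (l * Y w))"
  using integrable_moments integrable_abs_power_mult_exp_abs[OF assms]
  by (rule sums_integral_power_mult_exp)

end

definition conjugate_variance :: "'a measure \<Rightarrow> ('a \<Rightarrow> real) \<Rightarrow> real \<Rightarrow> real" where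
  "conjugate_variance M Y l =
     integral\<^sup>L M (\<lambda>x. (Y x)\<^sup>2 * exp (l * Y x)) / integral\<^sup>L M (\<lambda>x. exp (l * Y x))
     - (integral\<^sup>L M (\<lambda>x. Y x * exp (l * Y x)))\<^sup>2 / (integral\<^sup>L M (\<lambda>x. exp (l * Y x)))\<^sup>2"

lemma sigma_bar_sq_conjugate_variance:
  "sigma_bar_sq M X n l = (\<Sum>i=1..n. conjugate_variance M (X i) l)"
  by (simp add: sigma_bar_sq_def conjugate_variance_def)

locale bernstein_tilt = bernstein_variable +
  fixes l :: real
  assumes l_nonneg: "0 \<le> l" and l_eps_less_1: "l * eps < 1"
begin

lemma abs_l_eps_less_1: "\<bar>l\<bar> * eps < 1"
  using l_nonneg l_eps_less_1 by simp

lemma integrable_tilted: "j \<le> 2 \<Longrightarrow> integrable M (\<lambda>w. Y w ^ j * exp (l * Y w))"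
  by (rule integrable_power_mult_exp[OF abs_l_eps_less_1])

lemma one_le_exp_moment: "1 \<le> expectation (\<lambda>w. exp (l * Y w))"
  using integrable_moments[of 1] mean_zero integrable_tilted[of 0]
  by (intro exp_moment_ge_one) simp_all

lemma exp_moment_le:
  "expectation (\<lambda>w. exp (l * Y w)) \<le> 1 + l\<^sup>2 * expectation (\<lambda>w. (Y w)\<^sup>2) / (2 * (1 - l * eps))"
proof -
  define s where "s = expectation (\<lambda>w. (Y w)\<^sup>2)"
  define t where "t k = l ^ k / fact k * expectation (\<lambda>w. Y w ^ k)" for k
  have "t sums expectation (\<lambda>w. exp (l * Y w))"
    using exp_moment_sums[OF abs_l_eps_less_1, of 0] by (simp add: t_def[abs_def])
  moreover have "(\<Sum>k<2. t k) = 1"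
    using mean_zero prob_space by (simp add: t_def eval_nat_numeral)
  ultimately have "(\<lambda>k. t (k + 2)) sums (expectation (\<lambda>w. exp (l * Y w)) - 1)"
    using sums_iff_shift[of t 2] by simp
  moreover have "(\<lambda>k. l\<^sup>2 * s / 2 * (l * eps) ^ k) sums (l\<^sup>2 * s / 2 * (1 / (1 - l * eps)))"
    using l_nonneg eps_pos l_eps_less_1 by (intro sums_mult[OF geometric_sums]) simp
  moreover have "t (k + 2) \<le> l\<^sup>2 * s / 2 * (l * eps) ^ k" for k
  proof -
    have "t (k + 2) \<le> l ^ (k + 2) / fact (k + 2) * \<bar>expectation (\<lambda>w. Y w ^ (k + 2))\<bar>"
      unfolding t_def using l_nonneg by (intro mult_left_mono) simp_all
    also have "\<dots> \<le> l ^ (k + 2) / fact (k + 2) * (fact (k + 2) / 2 * eps ^ k * s)"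
      unfolding s_def using abs_moment_le[of "k + 2"] l_nonneg by (intro mult_left_mono) simp_all
    also have "\<dots> = l\<^sup>2 * s / 2 * (l * eps) ^ k"
      by (simp add: power_add power_mult_distrib power2_eq_square)
    finally show ?thesis .
  qed
  ultimately have "expectation (\<lambda>w. exp (l * Y w)) - 1 \<le> l\<^sup>2 * s / 2 * (1 / (1 - l * eps))"
    by (rule sums_le[rotated])
  then show ?thesis
    by (simp add: s_def)
qed

lemma exp_moment_le_ratio:
  "expectation (\<lambda>w. exp (l * Y w)) \<le> (1 - l * eps + 6 * l\<^sup>2 * eps\<^sup>2) / (1 - l * eps)"
proof -
  have "l\<^sup>2 * expectation (\<lambda>w. (Y w)\<^sup>2) \<le> l\<^sup>2 * (12 * eps\<^sup>2)"
    by (intro mult_left_mono second_moment_le) simp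
  then have "l\<^sup>2 * expectation (\<lambda>w. (Y w)\<^sup>2) / (2 * (1 - l * eps))
      \<le> l\<^sup>2 * (12 * eps\<^sup>2) / (2 * (1 - l * eps))"
    using l_eps_less_1 by (intro divide_right_mono) simp_all
  also have "\<dots> = 6 * l\<^sup>2 * eps\<^sup>2 / (1 - l * eps)"
    using l_eps_less_1 by (simp add: field_simps)
  finally show ?thesis
    using exp_moment_le l_eps_less_1 by (simp add: add_divide_distrib)
qed

lemma sq_exp_moment_le:
  "expectation (\<lambda>w. (Y w)\<^sup>2 * exp (l * Y w)) \<le> expectation (\<lambda>w. (Y w)\<^sup>2) / (1 - l * eps) ^ 3"
proof -
  have "l ^ k / fact k * expectation (\<lambda>w. Y w ^ (k + 2))
      \<le> expectation (\<lambda>w. (Y w)\<^sup>2) * real ((k + 2) choose 2) * (\<bar>l\<bar> * eps) ^ k" for k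
    using abs_exp_series_term_le[of l k] by linarith
  from sums_le[OF this exp_moment_sums[OF abs_l_eps_less_1, of 2]
      exp_series_majorant_sums[OF abs_l_eps_less_1]]
  show ?thesis
    using l_nonneg by simp
qed

lemma third_moment_ge: "- (3 * l * eps * expectation (\<lambda>w. (Y w)\<^sup>2)) \<le> l * expectation (\<lambda>w. Y w ^ 3)"
proof -
  have "l * \<bar>expectation (\<lambda>w. Y w ^ 3)\<bar> \<le> l * (3 * eps * expectation (\<lambda>w. (Y w)\<^sup>2))"
    using abs_moment_le[of 3] l_nonneg by (intro mult_left_mono) (simp_all add: fact_numeral)
  moreover have "- (l * expectation (\<lambda>w. Y w ^ 3)) \<le> l * \<bar>expectation (\<lambda>w. Y w ^ 3)\<bar>"
    using l_nonneg abs_ge_minus_self[of "l * expectation (\<lambda>w. Y w ^ 3)"] by (simp add: abs_mult)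
  ultimately show ?thesis
    by (simp add: mult.assoc)
qed

lemma conjugate_variance_le:
  "conjugate_variance M Y l \<le> expectation (\<lambda>w. (Y w)\<^sup>2) / (1 - l * eps) ^ 3"
proof -
  define A B C where "A = expectation (\<lambda>w. exp (l * Y w))"
    and "B = expectation (\<lambda>w. Y w * exp (l * Y w))"
    and "C = expectation (\<lambda>w. (Y w)\<^sup>2 * exp (l * Y w))"
  have "0 \<le> C"
    unfolding C_def by (intro integral_nonneg_AE) simp
  then have "C / A \<le> C"
    using one_le_exp_moment by (simp add: A_def divide_le_eq mult_le_cancel_left1 mult_left_le)
  moreover have "conjugate_variance M Y l = C / A - B\<^sup>2 / A\<^sup>2"
    by (simp add: conjugate_variance_def A_def B_def C_def)
  moreover have "0 \<le> B\<^sup>2 / A\<^sup>2"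
    by simp
  ultimately have "conjugate_variance M Y l \<le> C"
    by linarith
  also have "C \<le> expectation (\<lambda>w. (Y w)\<^sup>2) / (1 - l * eps) ^ 3"
    unfolding C_def by (rule sq_exp_moment_le)
  finally show ?thesis .
qed

lemma conjugate_variance_ge:
  "(1 - l * eps)\<^sup>2 * (1 - 3 * l * eps) / (1 - l * eps + 6 * l\<^sup>2 * eps\<^sup>2)\<^sup>2 * expectation (\<lambda>w. (Y w)\<^sup>2)
     \<le> conjugate_variance M Y l"
proof -
  define A B C where "A = expectation (\<lambda>w. exp (l * Y w))"
    and "B = expectation (\<lambda>w. Y w * exp (l * Y w))"
    and "C = expectation (\<lambda>w. (Y w)\<^sup>2 * exp (l * Y w))"
  define s D where "s = expectation (\<lambda>w. (Y w)\<^sup>2)" and "D = 1 - l * eps + 6 * l\<^sup>2 * eps\<^sup>2"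
  have A_ge_1: "1 \<le> A"
    unfolding A_def by (rule one_le_exp_moment)
  have variance_eq: "conjugate_variance M Y l = (A * C - B\<^sup>2) / A\<^sup>2"
    unfolding conjugate_variance_def A_def[symmetric] B_def[symmetric] C_def[symmetric]
    using A_ge_1 by (simp add: field_simps power2_eq_square)
  show ?thesis
  proof (cases "0 \<le> 1 - 3 * l * eps")
    case True
    have "(1 - 3 * l * eps) * s \<le> A * C - B\<^sup>2"
      using exp_tilted_gram_ge[of Y l] integrable_moments mean_zero integrable_tilted third_moment_ge
      by (simp add: A_def B_def C_def s_def algebra_simps)
    moreover have "A \<le> D / (1 - l * eps)"
      unfolding A_def D_def by (rule exp_moment_le_ratio)
    moreover have "0 < 1 - l * eps" and "0 \<le> s"
      using l_eps_less_1 second_moment_nonneg by (simp_all add: s_def)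
    ultimately have "(1 - 3 * l * eps) * s / (D / (1 - l * eps))\<^sup>2 \<le> conjugate_variance M Y l"
      unfolding variance_eq using True A_ge_1
      by (intro order.trans[OF divide_left_mono divide_right_mono] power_mono mult_pos_pos) auto
    then show ?thesis
      using \<open>0 < 1 - l * eps\<close> by (simp add: s_def D_def power_divide field_simps)
  next
    case False
    then have "(1 - l * eps)\<^sup>2 * (1 - 3 * l * eps) / D\<^sup>2 * s \<le> 0"
      using second_moment_nonneg
      by (intro mult_nonpos_nonneg divide_nonpos_nonneg mult_nonneg_nonpos) (simp_all add: s_def)
    also have "0 \<le> conjugate_variance M Y l"
      unfolding variance_eq A_def B_def C_def
      using integrable_tilted[of 0] integrable_tilted[of 1] integrable_tilted[of 2] A_ge_1
      by (intro divide_nonneg_nonneg integral_weighted_Cauchy_Schwarz[THEN diff_ge_0_iff_ge[THEN iffD2]])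
        (simp_all add: A_def)
    finally show ?thesis
      by (simp add: s_def D_def)
  qed
qed

end

theorem lemma3:
  fixes M :: "'a measure" and X :: "nat \<Rightarrow> 'a \<Rightarrow> real" and n :: nat and eps l :: real
  assumes "prob_space M"
    and "prob_space.indep_vars M (\<lambda>_. borel) X {1..n}"
    and "\<forall>i\<in>{1..n}. \<forall>k::nat. integrable M (\<lambda>x. (X i x) ^ k)"
    and "\<forall>i\<in>{1..n}. integral\<^sup>L M (X i) = 0"
    and "eps > 0"
    and "\<forall>i\<in>{1..n}. \<forall>k::nat. k \<ge> 3 \<longrightarrow>
           \<bar>integral\<^sup>L M (\<lambda>x. (X i x) ^ k)\<bar>
             \<le> 1/2 * fact k * eps ^ (k - 2) * integral\<^sup>L M (\<lambda>x. (X i x) ^ 2)"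
    and "0 \<le> l" and "l < 1 / eps"
  shows "(1 - l * eps)^2 * (1 - 3 * l * eps) / (1 - l * eps + 6 * l^2 * eps^2)^2 * sigma_sq M X n
           \<le> sigma_bar_sq M X n l
       \<and> sigma_bar_sq M X n l \<le> sigma_sq M X n / (1 - l * eps)^3"
proof -
  have tilt: "bernstein_tilt M (X i) eps l" if i: "i \<in> {1..n}" for i
  proof (intro bernstein_tilt.intro bernstein_variable.intro bernstein_tilt_axioms.intro
      bernstein_variable_axioms.intro)
    show "l * eps < 1"
      using assms(5,8) by (simp add: pos_less_divide_eq)
  qed (use assms i in auto)
  have "(1 - l * eps)^2 * (1 - 3 * l * eps) / (1 - l * eps + 6 * l^2 * eps^2)^2 * sigma_sq M X n
      \<le> sigma_bar_sq M X n l"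
    unfolding sigma_sq_def sigma_bar_sq_conjugate_variance sum_distrib_left
    by (intro sum_mono bernstein_tilt.conjugate_variance_ge tilt)
  moreover have "sigma_bar_sq M X n l \<le> sigma_sq M X n / (1 - l * eps)^3"
    unfolding sigma_sq_def sigma_bar_sq_conjugate_variance sum_divide_distrib
    by (intro sum_mono bernstein_tilt.conjugate_variance_le tilt)
  ultimately show ?thesis ..
qed

end
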